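(* Let $\alpha>0$. Consider the model $Y_i=f(x_i)+V_i^{1/2}\xi_i$, $i=1,\dots,n$, $x_i=i/n$, with $\xi_1,\dots,\xi_n\overset{iid}{\sim}N(0,1)$, $f\in\mathcal{H}_\alpha(M)$ and $V=(V_1,\dots,V_n)\in[0,M]^n$. Let $R_i=Y_{i+1}-Y_i$ for $1\le i\le n-1$ and $$\hat T=\frac1{2n^2}\sum_{\substack{1\le i,j\le n-1\\|i-j|\ge2}}\left(\tfrac13(R_i^4+R_j^4)-2R_i^2R_j^2\right).$$ With $W_i=V_{i+1}+V_i$, $\delta_i=f(x_{i+1})-f(x_i)$ ($1\le i\le n-1$), $\bar W_n=\frac1{n-1}\sum_{i=1}^{n-1}W_i$, $\overline{\delta^2_n}=\frac1{n-1}\sum_{i=1}^{n-1}\delta_i^2$ and $T=\frac1n\sum_{i=1}^{n-1}(W_i+\delta_i^2-\bar W_n-\overline{\delta^2_n})^2$, we have $$E_{f,V}\big(|\hat T-T|^2\big)\lesssim n^{-1}+n^{-8\alpha},$$ with an implicit constant not depending on $n,f,V$.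
   Context: $\mathcal{H}_\alpha(M)$: functions $g:[0,1]\to\mathbb{R}$ with $|g^{(\lfloor\alpha\rfloor)}(x)-g^{(\lfloor\alpha\rfloor)}(y)|\le M|x-y|^{\alpha-\lfloor\alpha\rfloor}$ for all $x,y$ and $\|g^{(k)}\|_\infty\le M$ for $k=0,\dots,\lfloor\alpha\rfloor$; $M$ is a fixed sufficiently large constant. $E_{f,V}$ is expectation under the model. *)

theory Defs
  imports "HOL-Probability.Probability"
begin

definition holder_class :: "real \<Rightarrow> real \<Rightarrow> (real \<Rightarrow> real) \<Rightarrow> bool" where
  "holder_class \<alpha> M g \<longleftrightarrow>
     (let k = nat \<lfloor>\<alpha>\<rfloor> in
      \<exists>D :: nat \<Rightarrow> real \<Rightarrow> real.
        (\<forall>x\<in>{0..1}. D 0 x = g x) \<and>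
        (\<forall>j<k. \<forall>x\<in>{0..1}. (D j has_real_derivative D (Suc j) x) (at x within {0..1})) \<and>
        (\<forall>j\<le>k. \<forall>x\<in>{0..1}. \<bar>D j x\<bar> \<le> M) \<and>
        (\<forall>x\<in>{0..1}. \<forall>y\<in>{0..1}. \<bar>D k x - D k y\<bar> \<le> M * \<bar>x - y\<bar> powr (\<alpha> - real k)))"

definition std_normal :: "real measure" where
  "std_normal = density lborel (\<lambda>x. ennreal (std_normal_density x))"

definition noise_law :: "nat \<Rightarrow> (nat \<Rightarrow> real) measure" where
  "noise_law n = PiM {1..n} (\<lambda>_. std_normal)"

definition obsY :: "nat \<Rightarrow> (real \<Rightarrow> real) \<Rightarrow> (nat \<Rightarrow> real) \<Rightarrow> (nat \<Rightarrow> real) \<Rightarrow> nat \<Rightarrow> real" where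
  "obsY n f V \<xi> i = f (real i / real n) + sqrt (V i) * \<xi> i"

definition diffR :: "nat \<Rightarrow> (real \<Rightarrow> real) \<Rightarrow> (nat \<Rightarrow> real) \<Rightarrow> (nat \<Rightarrow> real) \<Rightarrow> nat \<Rightarrow> real" where
  "diffR n f V \<xi> i = obsY n f V \<xi> (Suc i) - obsY n f V \<xi> i"

definition That :: "nat \<Rightarrow> (real \<Rightarrow> real) \<Rightarrow> (nat \<Rightarrow> real) \<Rightarrow> (nat \<Rightarrow> real) \<Rightarrow> real" where
  "That n f V \<xi> = 1 / (2 * real n ^ 2) *
     (\<Sum>i\<in>{1..n-1}. \<Sum>j\<in>{j\<in>{1..n-1}. 2 \<le> \<bar>int i - int j\<bar>}.
        (1/3) * (diffR n f V \<xi> i ^ 4 + diffR n f V \<xi> j ^ 4)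
        - 2 * diffR n f V \<xi> i ^ 2 * diffR n f V \<xi> j ^ 2)"

definition Wsum :: "(nat \<Rightarrow> real) \<Rightarrow> nat \<Rightarrow> real" where
  "Wsum V i = V (Suc i) + V i"

definition delta :: "nat \<Rightarrow> (real \<Rightarrow> real) \<Rightarrow> nat \<Rightarrow> real" where
  "delta n f i = f (real (Suc i) / real n) - f (real i / real n)"

definition Ttarget :: "nat \<Rightarrow> (real \<Rightarrow> real) \<Rightarrow> (nat \<Rightarrow> real) \<Rightarrow> real" where
  "Ttarget n f V =
     (let Wbar = (\<Sum>i\<in>{1..n-1}. Wsum V i) / real (n - 1);
          dbar = (\<Sum>i\<in>{1..n-1}. delta n f i ^ 2) / real (n - 1)
      in (1 / real n) * (\<Sum>i\<in>{1..n-1}. (Wsum V i + delta n f i ^ 2 - Wbar - dbar) ^ 2))"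

end

theory Submission
  imports Defs
begin

(*
  Write the statistic as 1/(2n^2) times the sum of h(R_i, R_j) over the pairs with |i - j| >= 2,
  where h(x, y) = (x^4 + y^4)/3 - 2 x^2 y^2.  Each R_i is Gaussian with mean delta_i and variance
  W_i, so E R_i^2 = m_i := W_i + delta_i^2 and E R_i^4 = 3 m_i^2 - 2 delta_i^4, and R_i, R_j are
  independent for |i - j| >= 2.  Hence E h(R_i, R_j) = (m_i - m_j)^2 - 2/3 (delta_i^4 + delta_j^4),
  and since the sum of (m_i - m_j)^2 over all pairs is 2(n-1) times the sum of (m_i - mean m)^2,
  the mean of the statistic differs from T by O(1/n) (the missing near-diagonal pairs) plus
  O(max delta_i^4) = O(n^(-4 min(alpha, 1))).  Centred summands built on disjoint blocks of noise
  coordinates are independent, so only O(n^3) of the n^4 covariances in the variance survive, each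
  bounded through the eighth moments of the R_i; the variance is therefore O(1/n).
*)

lemma abs_mult_le_sum_squares: "\<bar>a * b\<bar> \<le> a\<^sup>2 + (b::real)\<^sup>2"
proof -
  have "2 * \<bar>a\<bar> * \<bar>b\<bar> \<le> a\<^sup>2 + b\<^sup>2"
    using sum_squares_ge_zero[of "\<bar>a\<bar> - \<bar>b\<bar>" 0] by (simp add: power2_eq_square algebra_simps)
  moreover have "0 \<le> \<bar>a\<bar> * \<bar>b\<bar>" by simp
  ultimately show ?thesis unfolding abs_mult by linarith
qed

lemma square_add_le: "(a + b)\<^sup>2 \<le> 2 * a\<^sup>2 + 2 * (b::real)\<^sup>2"
  using sum_squares_ge_zero[of "a - b" 0] by (simp add: power2_eq_square algebra_simps)

lemma power8_sum3_le: "(x + y + z :: real) ^ 8 \<le> 3 ^ 8 * (x ^ 8 + y ^ 8 + z ^ 8)"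
proof -
  define m where "m = max \<bar>x\<bar> (max \<bar>y\<bar> \<bar>z\<bar>)"
  have "\<bar>x + y + z\<bar> ^ 8 \<le> (3 * m) ^ 8"
    unfolding m_def by (intro power_mono) linarith+
  moreover have "m ^ 8 \<le> x ^ 8 + y ^ 8 + z ^ 8"
    unfolding m_def by (auto simp: max_def power_even_abs_numeral zero_le_even_power)
  ultimately show ?thesis by (simp add: power_mult_distrib power_even_abs_numeral)
qed

lemma quartic_kernel_square_le:
  "((1/3) * (x ^ 4 + y ^ 4) - 2 * x\<^sup>2 * y\<^sup>2)\<^sup>2 \<le> 5 * (x ^ 8 + (y::real) ^ 8)"
proof -
  have cross: "2 * (x ^ 4 * y ^ 4) \<le> x ^ 8 + y ^ 8"
    using sum_squares_ge_zero[of "x ^ 4 - y ^ 4" 0] by (simp add: power2_eq_square algebra_simps)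
  have "((1/3) * (x ^ 4 + y ^ 4) - 2 * x\<^sup>2 * y\<^sup>2)\<^sup>2
      \<le> 2 * ((1/3) * (x ^ 4 + y ^ 4))\<^sup>2 + 2 * (- (2 * x\<^sup>2 * y\<^sup>2))\<^sup>2"
    using square_add_le[of "(1/3) * (x ^ 4 + y ^ 4)" "- (2 * x\<^sup>2 * y\<^sup>2)"] by simp
  also have "\<dots> = (2/9) * (x ^ 4 + y ^ 4)\<^sup>2 + 2 * (2 * x\<^sup>2 * y\<^sup>2)\<^sup>2"
    by (simp add: power_mult_distrib power2_eq_square)
  also have "\<dots> \<le> (2/9) * (2 * (x ^ 8 + y ^ 8)) + 2 * (2 * (x ^ 8 + y ^ 8))"
  proof (intro add_mono mult_left_mono)
    show "(x ^ 4 + y ^ 4)\<^sup>2 \<le> 2 * (x ^ 8 + y ^ 8)"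
      using cross by (simp add: power2_eq_square algebra_simps)
    show "(2 * x\<^sup>2 * y\<^sup>2)\<^sup>2 \<le> 2 * (x ^ 8 + y ^ 8)"
      using cross by (simp add: power_mult_distrib flip: power_mult)
  qed simp_all
  also have "\<dots> \<le> 5 * (x ^ 8 + y ^ 8)"
    using zero_le_even_power[of 8 x] zero_le_even_power[of 8 y] by simp
  finally show ?thesis .
qed

definition separated :: "nat \<Rightarrow> nat \<Rightarrow> bool" where
  "separated i j \<longleftrightarrow> 2 \<le> \<bar>int i - int j\<bar>"

lemma card_not_separated_le: "card {k \<in> K. \<not> separated i k} \<le> 3"
proof -
  have "card {k \<in> K. \<not> separated i k} \<le> card {i - 1, i, Suc i}"
    by (rule card_mono) (auto simp: separated_def)
  also have "\<dots> \<le> 3" by (simp add: card_insert_le_m1)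
  finally show ?thesis .
qed

lemma sum_not_separated_le:
  fixes c :: real
  assumes "finite K" "0 \<le> c"
  shows "(\<Sum>k\<in>K. if separated i k then 0 else c) \<le> 3 * c"
proof -
  have "(\<Sum>k\<in>K. if separated i k then 0 else c) = c * card {k \<in> K. \<not> separated i k}"
    using assms(1) by (simp add: sum.If_cases Int_def)
  also have "\<dots> \<le> c * 3" using card_not_separated_le assms(2) by (intro mult_left_mono) auto
  finally show ?thesis by simp
qed

lemma sum_sum_not_separated_le:
  fixes g :: "nat \<Rightarrow> nat \<Rightarrow> real" and c :: real
  assumes "finite I" and g: "\<And>i j. i \<in> I \<Longrightarrow> j \<in> I \<Longrightarrow> g i j \<le> c" and "0 \<le> c"
  shows "(\<Sum>i\<in>I. \<Sum>j\<in>I. if separated i j then 0 else g i j) \<le> 3 * real (card I) * c"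
proof -
  have "(\<Sum>i\<in>I. \<Sum>j\<in>I. if separated i j then 0 else g i j) \<le> (\<Sum>i\<in>I. \<Sum>j\<in>I. if separated i j then 0 else c)"
    using g by (intro sum_mono) auto
  also have "\<dots> \<le> (\<Sum>i\<in>I. 3 * c)"
    using assms by (intro sum_mono sum_not_separated_le)
  finally show ?thesis by simp
qed

fun pairs_separated :: "nat \<times> nat \<Rightarrow> nat \<times> nat \<Rightarrow> bool" where
  "pairs_separated (i, j) (k, l) \<longleftrightarrow> separated i k \<and> separated i l \<and> separated j k \<and> separated j l"

lemma sum_not_pairs_separated_le:
  fixes c :: real
  assumes K: "finite K" and c: "0 \<le> c"
  shows "(\<Sum>q\<in>K \<times> K. if pairs_separated p q then 0 else c) \<le> 12 * real (card K) * c"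
proof -
  obtain i j where p: "p = (i, j)" by fastforce
  define near where "near a b = (if separated a b then 0 else c)" for a b
  have scaled: "real (card K) * (\<Sum>k\<in>K. near a k) \<le> 3 * real (card K) * c" for a
    using mult_left_mono[OF sum_not_separated_le[OF K c, of a], of "real (card K)"] unfolding near_def by simp
  have row: "(\<Sum>(k, l)\<in>K \<times> K. near a k) \<le> 3 * real (card K) * c"
    and column: "(\<Sum>(k, l)\<in>K \<times> K. near a l) \<le> 3 * real (card K) * c" for a
    using scaled[of a] by (simp_all add: sum.cartesian_product[symmetric] sum_distrib_left)
  have "(\<Sum>q\<in>K \<times> K. if pairs_separated p q then 0 else c)
      \<le> (\<Sum>(k, l)\<in>K \<times> K. near i k + near i l + near j k + near j l)"
    unfolding p near_def using c by (intro sum_mono) auto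
  also have "\<dots> \<le> 12 * real (card K) * c"
    using row[of i] row[of j] column[of i] column[of j]
    by (simp add: case_prod_beta sum.distrib)
  finally show ?thesis .
qed

section \<open>Empirical variance and the bias of the statistic\<close>

lemma sum_sum_square_diff_eq:
  fixes m :: "'a \<Rightarrow> real"
  assumes "finite I"
  shows "(\<Sum>i\<in>I. \<Sum>j\<in>I. (m i - m j)\<^sup>2) = 2 * card I * (\<Sum>i\<in>I. (m i - (\<Sum>k\<in>I. m k) / card I)\<^sup>2)"
proof (cases "I = {}")
  case False
  define N where "N = real (card I)"
  define s where "s = (\<Sum>k\<in>I. m k)"
  have N: "0 < N" unfolding N_def using assms False by (simp add: card_gt_0_iff)
  have "(\<Sum>i\<in>I. \<Sum>j\<in>I. (m i - m j)\<^sup>2) = 2 * N * (\<Sum>i\<in>I. (m i)\<^sup>2) - 2 * s\<^sup>2"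
    unfolding N_def s_def
    by (simp add: power2_diff sum.distrib sum_subtractf sum_distrib_left sum_distrib_right power2_eq_square algebra_simps)
  moreover have "(\<Sum>i\<in>I. (m i - s / N)\<^sup>2) = (\<Sum>i\<in>I. (m i)\<^sup>2) - 2 * (s / N) * s + N * (s / N)\<^sup>2"
    unfolding power2_diff N_def s_def
    by (simp add: sum.distrib sum_subtractf sum_distrib_left[symmetric] sum_divide_distrib[symmetric]
        sum_distrib_right[symmetric] mult.assoc)
  moreover have "2 * (s / N) * s - N * (s / N)\<^sup>2 = s\<^sup>2 / N"
    using N by (simp add: field_simps power2_eq_square)
  ultimately show ?thesis using N unfolding N_def s_def by (simp add: field_simps power2_eq_square)
qed simp

lemma sum_square_deviation_le:
  fixes m :: "'a \<Rightarrow> real" and B :: real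
  assumes "finite I" and m: "\<And>i. i \<in> I \<Longrightarrow> 0 \<le> m i \<and> m i \<le> B"
  shows "(\<Sum>i\<in>I. (m i - (\<Sum>k\<in>I. m k) / card I)\<^sup>2) \<le> card I * B\<^sup>2"
proof (cases "I = {}")
  case False
  then have "0 < card I" using assms(1) by (simp add: card_gt_0_iff)
  then have mean: "0 \<le> (\<Sum>k\<in>I. m k) / card I \<and> (\<Sum>k\<in>I. m k) / card I \<le> B"
    using sum_nonneg[of I m] sum_bounded_above[of I m B] m by (auto simp: field_simps)
  have "(m i - (\<Sum>k\<in>I. m k) / card I)\<^sup>2 \<le> B\<^sup>2" if "i \<in> I" for i
    using m[OF that] mean by (subst power2_le_iff_abs_le) (auto simp: abs_le_iff)
  then show ?thesis using sum_mono[of I _ "\<lambda>_. B\<^sup>2"] by simp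
qed simp

text \<open>With \<open>m i = E R\<^sub>i\<^sup>2\<close> and \<open>d i = \<delta>\<^sub>i\<^sup>4\<close> the left-hand side is the bias of the
  statistic, and \<open>H\<close> collects the near-diagonal pairs that the statistic leaves out.\<close>
lemma separated_pairs_bias_eq:
  fixes m d :: "nat \<Rightarrow> real" and N :: nat
  defines "SY \<equiv> \<Sum>i\<in>{1..N}. (m i - (\<Sum>k\<in>{1..N}. m k) / real N)\<^sup>2"
    and "H \<equiv> \<Sum>i\<in>{1..N}. \<Sum>j\<in>{1..N}. if separated i j then 0 else (m i - m j)\<^sup>2"
    and "Q \<equiv> \<Sum>i\<in>{1..N}. \<Sum>j\<in>{1..N}. if separated i j then (2/3) * (d i + d j) else 0"
  shows "1 / (2 * real (N + 1) ^ 2) *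
            (\<Sum>i\<in>{1..N}. \<Sum>j\<in>{1..N}. if separated i j then (m i - m j)\<^sup>2 - (2/3) * (d i + d j) else 0)
          - 1 / real (N + 1) * SY = - ((2 * SY + H + Q) / (2 * real (N + 1) ^ 2))"
proof -
  have "(if separated i j then (m i - m j)\<^sup>2 - (2/3) * (d i + d j) else 0)
      = (m i - m j)\<^sup>2 - (if separated i j then 0 else (m i - m j)\<^sup>2)
        - (if separated i j then (2/3) * (d i + d j) else 0)" for i j
    by simp
  then have "(\<Sum>i\<in>{1..N}. \<Sum>j\<in>{1..N}. if separated i j then (m i - m j)\<^sup>2 - (2/3) * (d i + d j) else 0)
      = (\<Sum>i\<in>{1..N}. \<Sum>j\<in>{1..N}. (m i - m j)\<^sup>2) - H - Q"
    unfolding H_def Q_def by (simp add: sum_subtractf)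
  also have "(\<Sum>i\<in>{1..N}. \<Sum>j\<in>{1..N}. (m i - m j)\<^sup>2) = 2 * real N * SY"
    unfolding SY_def by (simp add: sum_sum_square_diff_eq)
  finally have sum_eq: "(\<Sum>i\<in>{1..N}. \<Sum>j\<in>{1..N}. if separated i j then (m i - m j)\<^sup>2 - (2/3) * (d i + d j) else 0)
      = 2 * real N * SY - H - Q" .
  define n where "n = real (N + 1)"
  have n: "0 < n" "real N = n - 1" unfolding n_def by simp_all
  show ?thesis
    unfolding sum_eq n_def[symmetric] n(2) using n(1) by (simp add: field_simps power2_eq_square)
qed

lemma separated_pairs_bias_le:
  fixes m d :: "nat \<Rightarrow> real"
  assumes N: "1 \<le> N"
    and m: "\<And>i. i \<in> {1..N} \<Longrightarrow> 0 \<le> m i \<and> m i \<le> B"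
    and d: "\<And>i. i \<in> {1..N} \<Longrightarrow> 0 \<le> d i \<and> d i \<le> D"
  shows "\<bar>1 / (2 * real (N + 1) ^ 2) *
            (\<Sum>i\<in>{1..N}. \<Sum>j\<in>{1..N}. if separated i j then (m i - m j)\<^sup>2 - (2/3) * (d i + d j) else 0)
          - 1 / real (N + 1) * (\<Sum>i\<in>{1..N}. (m i - (\<Sum>k\<in>{1..N}. m k) / real N)\<^sup>2)\<bar>
         \<le> 3 * B\<^sup>2 / real (N + 1) + D"
proof -
  define I where "I = {1..N}"
  define n where "n = real (N + 1)"
  define SY where "SY = (\<Sum>i\<in>I. (m i - (\<Sum>k\<in>I. m k) / real N)\<^sup>2)"
  define H where "H = (\<Sum>i\<in>I. \<Sum>j\<in>I. if separated i j then 0 else (m i - m j)\<^sup>2)"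
  define Q where "Q = (\<Sum>i\<in>I. \<Sum>j\<in>I. if separated i j then (2/3) * (d i + d j) else 0)"
  have n: "0 < n" "real N \<le> n" unfolding n_def by simp_all
  have B: "0 \<le> B" and D: "0 \<le> D" using m[of 1] d[of 1] N by auto
  have "0 \<le> SY" "0 \<le> H" "0 \<le> Q"
    unfolding SY_def H_def Q_def using d by (auto intro!: sum_nonneg simp: I_def)
  have "SY \<le> real N * B\<^sup>2"
    using sum_square_deviation_le[of I m B] m unfolding SY_def I_def by simp
  moreover have "H \<le> 3 * real N * B\<^sup>2"
  proof -
    have "(m i - m j)\<^sup>2 \<le> B\<^sup>2" if "i \<in> I" "j \<in> I" for i j
      using m[of i] m[of j] that B unfolding I_def by (subst power2_le_iff_abs_le) auto
    then show ?thesis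
      using sum_sum_not_separated_le[of I "\<lambda>i j. (m i - m j)\<^sup>2" "B\<^sup>2"] unfolding H_def I_def by simp
  qed
  moreover have "Q \<le> (\<Sum>i\<in>I. \<Sum>j\<in>I. (4/3) * D)"
  proof (unfold Q_def, intro sum_mono)
    fix i j assume "i \<in> I" "j \<in> I"
    then show "(if separated i j then (2/3) * (d i + d j) else 0) \<le> (4/3) * D"
      using d[of i] d[of j] D by (auto simp: I_def)
  qed
  moreover have "real N * B\<^sup>2 \<le> n * B\<^sup>2" "(real N)\<^sup>2 * D \<le> n\<^sup>2 * D"
    using n D by (auto intro!: mult_right_mono power_mono)
  ultimately have "2 * SY + H + Q \<le> 5 * n * B\<^sup>2 + (4/3) * n\<^sup>2 * D"
    by (simp add: I_def power2_eq_square)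
  then have "(2 * SY + H + Q) / (2 * n\<^sup>2) \<le> (5 * n * B\<^sup>2 + (4/3) * n\<^sup>2 * D) / (2 * n\<^sup>2)"
    by (rule divide_right_mono) simp
  also have "\<dots> = (5/2) * (B\<^sup>2 / n) + (2/3) * D"
    using n by (simp add: field_simps power2_eq_square)
  finally have "(2 * SY + H + Q) / (2 * n\<^sup>2) \<le> (5/2) * (B\<^sup>2 / n) + (2/3) * D" .
  moreover have "0 \<le> (2 * SY + H + Q) / (2 * n\<^sup>2)" "0 \<le> B\<^sup>2 / n"
    using \<open>0 \<le> SY\<close> \<open>0 \<le> H\<close> \<open>0 \<le> Q\<close> n by simp_all
  ultimately have "\<bar>- ((2 * SY + H + Q) / (2 * n\<^sup>2))\<bar> \<le> 3 * (B\<^sup>2 / n) + D"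
    using D by linarith
  then show ?thesis
    unfolding separated_pairs_bias_eq SY_def H_def Q_def I_def n_def by simp
qed

lemma integrable_mult_of_squares:
  fixes F G :: "'a \<Rightarrow> real"
  assumes "integrable M (\<lambda>x. (F x)\<^sup>2)" "integrable M (\<lambda>x. (G x)\<^sup>2)"
    and [measurable]: "F \<in> borel_measurable M" "G \<in> borel_measurable M"
  shows "integrable M (\<lambda>x. F x * G x)"
proof (rule Bochner_Integration.integrable_bound)
  show "integrable M (\<lambda>x. (F x)\<^sup>2 + (G x)\<^sup>2)" using assms(1,2) by (rule Bochner_Integration.integrable_add)
  have "norm (F x * G x) \<le> norm ((F x)\<^sup>2 + (G x)\<^sup>2)" for x
    using abs_mult_le_sum_squares[of "F x" "G x"] by simp
  then show "AE x in M. norm (F x * G x) \<le> norm ((F x)\<^sup>2 + (G x)\<^sup>2)" by simp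
qed measurable

lemma integral_sum_sum:
  fixes F :: "'i \<Rightarrow> 'j \<Rightarrow> 'a \<Rightarrow> real"
  assumes "\<And>a b. a \<in> A \<Longrightarrow> b \<in> B \<Longrightarrow> integrable M (F a b)"
  shows "integral\<^sup>L M (\<lambda>x. \<Sum>a\<in>A. \<Sum>b\<in>B. F a b x) = (\<Sum>a\<in>A. \<Sum>b\<in>B. integral\<^sup>L M (F a b))"
  using assms by (simp add: Bochner_Integration.integral_sum)

section \<open>Moments of the standard normal distribution\<close>

lemma prob_space_std_normal: "prob_space std_normal"
  unfolding std_normal_def using real_dist_normal_dist by (simp add: real_distribution_def)

lemma sets_std_normal [simp, measurable_cong]: "sets std_normal = sets borel"
  unfolding std_normal_def by simp

lemma integrable_std_normal_power: "integrable std_normal (\<lambda>x. x ^ k)"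
  unfolding std_normal_def
  by (subst integrable_density) (auto simp: normal_density_nonneg intro: integrable_std_normal_moment)

definition std_normal_moment :: "nat \<Rightarrow> real" where
  "std_normal_moment k = integral\<^sup>L std_normal (\<lambda>x. x ^ k)"

lemma std_normal_moment_even: "std_normal_moment (2 * k) = fact (2 * k) / (2 ^ k * fact k)"
  unfolding std_normal_moment_def std_normal_def
  by (subst integral_density) (auto simp: normal_density_nonneg integral_std_normal_moment_even)

lemma std_normal_moment_odd: "std_normal_moment (2 * k + 1) = 0"
  unfolding std_normal_moment_def std_normal_def
  using integral_std_normal_moment_odd[of k]
  by (subst integral_density) (auto simp: normal_density_nonneg simp del: power_Suc)

lemma std_normal_moment_values:
  "std_normal_moment 0 = 1" "std_normal_moment (Suc 0) = 0" "std_normal_moment (Suc (Suc 0)) = 1"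
  "std_normal_moment (Suc (Suc (Suc 0))) = 0" "std_normal_moment (Suc (Suc (Suc (Suc 0)))) = 3"
  using std_normal_moment_even[of 0] std_normal_moment_odd[of 0] std_normal_moment_even[of 1]
    std_normal_moment_odd[of 1] std_normal_moment_even[of 2]
  by (simp_all add: fact_numeral eval_nat_numeral)

lemma std_normal_moment_eight: "std_normal_moment 8 = 105"
  using std_normal_moment_even[of 4] by (simp add: fact_numeral)

lemma integrable_std_normal_affine_power: "integrable std_normal (\<lambda>x. (c + a * x :: real) ^ k)"
  and integral_std_normal_affine_power:
    "integral\<^sup>L std_normal (\<lambda>x. (c + a * x :: real) ^ k)
       = (\<Sum>j\<le>k. real (k choose j) * a ^ j * c ^ (k - j) * std_normal_moment j)"
proof -
  have expand: "(c + a * x) ^ k = (\<Sum>j\<le>k. (real (k choose j) * a ^ j * c ^ (k - j)) * x ^ j)" for x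
    using binomial_ring[of "a * x" c k] by (simp add: add.commute power_mult_distrib mult_ac)
  have terms: "integrable std_normal (\<lambda>x. (real (k choose j) * a ^ j * c ^ (k - j)) * x ^ j)" for j
    by (intro integrable_mult_right integrable_std_normal_power)
  show "integrable std_normal (\<lambda>x. (c + a * x :: real) ^ k)"
    unfolding expand by (intro Bochner_Integration.integrable_sum terms)
  show "integral\<^sup>L std_normal (\<lambda>x. (c + a * x :: real) ^ k)
      = (\<Sum>j\<le>k. real (k choose j) * a ^ j * c ^ (k - j) * std_normal_moment j)"
    unfolding expand
    by (subst Bochner_Integration.integral_sum)
       (auto intro: terms simp: std_normal_moment_def integrable_std_normal_power)
qed

lemma prob_space_noise_law: "prob_space (noise_law n)"
  unfolding noise_law_def by (intro prob_space_PiM prob_space_std_normal)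

lemma measurable_noise_coordinate: "u \<in> {1..n} \<Longrightarrow> (\<lambda>\<omega>. \<omega> u) \<in> measurable (noise_law n) std_normal"
  unfolding noise_law_def by (rule measurable_component_singleton)

lemma borel_measurable_noise_coordinate [measurable (raw)]:
  "u \<in> {1..n} \<Longrightarrow> (\<lambda>\<omega>. \<omega> u) \<in> borel_measurable (noise_law n)"
  using measurable_noise_coordinate by (simp add: measurable_def)

lemma distr_noise_coordinate: "u \<in> {1..n} \<Longrightarrow> distr (noise_law n) std_normal (\<lambda>\<omega>. \<omega> u) = std_normal"
  unfolding noise_law_def by (intro distr_PiM_component prob_space_std_normal) auto

lemma
  fixes g :: "real \<Rightarrow> real"
  assumes u: "u \<in> {1..n}" and [measurable]: "g \<in> borel_measurable borel"
  shows integrable_noise_coordinate: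
      "integrable std_normal g \<Longrightarrow> integrable (noise_law n) (\<lambda>\<omega>. g (\<omega> u))"
    and integral_noise_coordinate:
      "integral\<^sup>L (noise_law n) (\<lambda>\<omega>. g (\<omega> u)) = integral\<^sup>L std_normal g"
proof -
  note m = measurable_noise_coordinate[OF u]
  show "integrable std_normal g \<Longrightarrow> integrable (noise_law n) (\<lambda>\<omega>. g (\<omega> u))"
    using integrable_distr_eq[OF m, of g] distr_noise_coordinate[OF u] by simp
  show "integral\<^sup>L (noise_law n) (\<lambda>\<omega>. g (\<omega> u)) = integral\<^sup>L std_normal g"
    using integral_distr[OF m, of g] distr_noise_coordinate[OF u] by simp
qed

lemma indep_vars_noise_coordinates:
  assumes "1 \<le> n"
  shows "prob_space.indep_vars (noise_law n) (\<lambda>_. std_normal) (\<lambda>k \<omega>. \<omega> k) {1..n}"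
proof -
  interpret prob_space "noise_law n" by (rule prob_space_noise_law)
  have "distr (noise_law n) (\<Pi>\<^sub>M i\<in>{1..n}. std_normal) (\<lambda>\<omega>. \<lambda>i\<in>{1..n}. \<omega> i)
      = distr (noise_law n) (noise_law n) (\<lambda>\<omega>. \<omega>)"
    by (rule distr_cong) (simp_all add: noise_law_def space_PiM)
  also have "\<dots> = noise_law n" by (rule distr_id)
  also have "\<dots> = (\<Pi>\<^sub>M i\<in>{1..n}. distr (noise_law n) std_normal (\<lambda>\<omega>. \<omega> i))"
    by (subst noise_law_def, intro PiM_cong) (simp_all add: distr_noise_coordinate)
  finally show ?thesis
    using assms by (intro iffD2[OF indep_vars_iff_distr_eq_PiM'] measurable_noise_coordinate) auto
qed

lemma integral_noise_mult_disjoint_blocks: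
  fixes g h :: "(nat \<Rightarrow> real) \<Rightarrow> real"
  assumes n: "1 \<le> n" and AB: "A \<subseteq> {1..n}" "B \<subseteq> {1..n}" "A \<inter> B = {}"
    and gm: "g \<in> borel_measurable (PiM A (\<lambda>_. std_normal))"
    and hm: "h \<in> borel_measurable (PiM B (\<lambda>_. std_normal))"
    and gA: "\<And>\<omega>. g (restrict \<omega> A) = g \<omega>" and hB: "\<And>\<omega>. h (restrict \<omega> B) = h \<omega>"
    and gi: "integrable (noise_law n) g" and hi: "integrable (noise_law n) h"
  shows "integral\<^sup>L (noise_law n) (\<lambda>\<omega>. g \<omega> * h \<omega>)
       = integral\<^sup>L (noise_law n) g * integral\<^sup>L (noise_law n) h"
proof -
  interpret prob_space "noise_law n" by (rule prob_space_noise_law)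
  have "indep_vars (\<lambda>b. PiM (if b then A else B) (\<lambda>_. std_normal))
      (\<lambda>b \<omega>. restrict (\<lambda>i. \<omega> i) (if b then A else B)) UNIV"
    using AB by (intro indep_vars_restrict[OF indep_vars_noise_coordinates[OF n]])
      (auto simp: disjoint_family_on_def)
  then have "indep_var (PiM A (\<lambda>_. std_normal)) (\<lambda>\<omega>. restrict \<omega> A)
      (PiM B (\<lambda>_. std_normal)) (\<lambda>\<omega>. restrict \<omega> B)"
    unfolding indep_var_def by (rule indep_vars_cong[THEN iffD1, rotated 3]) (auto split: bool.split)
  then have "indep_var borel (g \<circ> (\<lambda>\<omega>. restrict \<omega> A)) borel (h \<circ> (\<lambda>\<omega>. restrict \<omega> B))"
    by (rule indep_var_compose[OF _ gm hm])
  then have "indep_var borel g borel h"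
    by (simp add: comp_def gA hB)
  then show ?thesis using gi hi by (rule indep_var_lebesgue_integral)
qed

lemma integral_noise_mult_two_coordinates:
  fixes p q :: "real \<Rightarrow> real"
  assumes u: "u \<in> {1..n}" and v: "v \<in> {1..n}" and "u \<noteq> v"
    and [measurable]: "p \<in> borel_measurable borel" "q \<in> borel_measurable borel"
    and "integrable std_normal p" "integrable std_normal q"
  shows "integral\<^sup>L (noise_law n) (\<lambda>\<omega>. p (\<omega> u) * q (\<omega> v))
       = integral\<^sup>L std_normal p * integral\<^sup>L std_normal q"
  using assms
  by (subst integral_noise_mult_disjoint_blocks[where A = "{u}" and B = "{v}"])
     (auto simp: integrable_noise_coordinate integral_noise_coordinate)

lemma
  assumes u: "u \<in> {1..n}" and v: "v \<in> {1..n}" and uv: "u \<noteq> v"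
  shows integrable_noise_affine_power: "integrable (noise_law n) (\<lambda>\<omega>. (c + b * \<omega> u + a * \<omega> v) ^ k)"
    and integral_noise_affine_power:
      "integral\<^sup>L (noise_law n) (\<lambda>\<omega>. (c + b * \<omega> u + a * \<omega> v) ^ k)
       = (\<Sum>j\<le>k. real (k choose j) * a ^ j * std_normal_moment j *
            (\<Sum>l\<le>k - j. real ((k - j) choose l) * b ^ l * c ^ (k - j - l) * std_normal_moment l))"
proof -
  note [measurable] = borel_measurable_noise_coordinate[OF u] borel_measurable_noise_coordinate[OF v]
  have expand: "(c + b * \<omega> u + a * \<omega> v) ^ k
     = (\<Sum>j\<le>k. real (k choose j) * a ^ j * ((c + b * \<omega> u) ^ (k - j) * \<omega> v ^ j))" for \<omega>
    using binomial_ring[of "a * \<omega> v" "c + b * \<omega> u" k]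
    by (simp add: add.commute add.left_commute power_mult_distrib mult_ac)
  have integrable_coordinate_power: "integrable (noise_law n) (\<lambda>\<omega>. (c' + a' * \<omega> w) ^ m)"
    if "w \<in> {1..n}" for c' a' w m
    using integrable_noise_coordinate[OF that _ integrable_std_normal_affine_power[of c' a' m]] by simp
  have terms: "integrable (noise_law n) (\<lambda>\<omega>. real (k choose j) * a ^ j * ((c + b * \<omega> u) ^ (k - j) * \<omega> v ^ j))" for j
  proof (intro integrable_mult_right integrable_mult_of_squares)
    show "integrable (noise_law n) (\<lambda>\<omega>. ((c + b * \<omega> u) ^ (k - j))\<^sup>2)"
      using integrable_coordinate_power[OF u, of c b "(k - j) * 2"] by (simp add: power_mult)
    show "integrable (noise_law n) (\<lambda>\<omega>. (\<omega> v ^ j)\<^sup>2)"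
      using integrable_coordinate_power[OF v, of 0 1 "j * 2"] by (simp add: power_mult)
  qed simp_all
  show "integrable (noise_law n) (\<lambda>\<omega>. (c + b * \<omega> u + a * \<omega> v) ^ k)"
    unfolding expand by (intro Bochner_Integration.integrable_sum terms)
  have factor: "integral\<^sup>L (noise_law n) (\<lambda>\<omega>. (c + b * \<omega> u) ^ (k - j) * \<omega> v ^ j)
     = std_normal_moment j * (\<Sum>l\<le>k - j. real ((k - j) choose l) * b ^ l * c ^ (k - j - l) * std_normal_moment l)" for j
    using integral_noise_mult_two_coordinates[OF u v uv, of "\<lambda>x. (c + b * x) ^ (k - j)" "\<lambda>x. x ^ j"]
      integral_std_normal_affine_power[of c b "k - j"] integrable_std_normal_affine_power[of c b "k - j"]
      integrable_std_normal_power[of j]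
    by (simp add: std_normal_moment_def mult.commute)
  have "integral\<^sup>L (noise_law n) (\<lambda>\<omega>. (c + b * \<omega> u + a * \<omega> v) ^ k)
     = (\<Sum>j\<le>k. integral\<^sup>L (noise_law n)
          (\<lambda>\<omega>. real (k choose j) * a ^ j * ((c + b * \<omega> u) ^ (k - j) * \<omega> v ^ j)))"
    unfolding expand by (rule Bochner_Integration.integral_sum) (rule terms)
  then show "integral\<^sup>L (noise_law n) (\<lambda>\<omega>. (c + b * \<omega> u + a * \<omega> v) ^ k)
     = (\<Sum>j\<le>k. real (k choose j) * a ^ j * std_normal_moment j *
          (\<Sum>l\<le>k - j. real ((k - j) choose l) * b ^ l * c ^ (k - j - l) * std_normal_moment l))"
    by (simp only: integral_mult_right_zero factor mult.assoc)
qed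

lemma integral_noise_affine_square:
  assumes "u \<in> {1..n}" "v \<in> {1..n}" "u \<noteq> v"
  shows "integral\<^sup>L (noise_law n) (\<lambda>\<omega>. (c + b * \<omega> u + a * \<omega> v)\<^sup>2) = c\<^sup>2 + b\<^sup>2 + a\<^sup>2"
  using integral_noise_affine_power[OF assms, of c b a 2]
  by (simp add: numeral_eq_Suc std_normal_moment_values algebra_simps power2_eq_square)

lemma integral_noise_affine_fourth:
  assumes "u \<in> {1..n}" "v \<in> {1..n}" "u \<noteq> v"
  shows "integral\<^sup>L (noise_law n) (\<lambda>\<omega>. (c + b * \<omega> u + a * \<omega> v) ^ 4)
       = c ^ 4 + 6 * c\<^sup>2 * (a\<^sup>2 + b\<^sup>2) + 3 * (a\<^sup>2 + b\<^sup>2)\<^sup>2"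
  using integral_noise_affine_power[OF assms, of c b a 4]
  by (simp add: numeral_eq_Suc std_normal_moment_values algebra_simps power2_eq_square)

section \<open>The bounded model\<close>

definition second_moment_bound :: "real \<Rightarrow> real" where
  "second_moment_bound M = 4 * M\<^sup>2 + 2 * M"

text \<open>\<open>(2 * M) ^ 8\<close> bounds \<open>delta\<^sup>8\<close>, and \<open>E \<xi>\<^sup>8 = 105\<close> enters once for each of the two
  noise terms of a difference \<open>R\<^sub>i\<close>.\<close>
definition eighth_moment_bound :: "real \<Rightarrow> real" where
  "eighth_moment_bound M = 3 ^ 8 * ((2 * M) ^ 8 + 210 * M ^ 4)"

locale bounded_model =
  fixes n :: nat and f :: "real \<Rightarrow> real" and V :: "nat \<Rightarrow> real" and M :: real
  assumes n_ge_2: "2 \<le> n"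
    and f_bounded: "\<And>x. 0 \<le> x \<Longrightarrow> x \<le> 1 \<Longrightarrow> \<bar>f x\<bar> \<le> M"
    and V_bounded: "\<And>i. i \<in> {1..n} \<Longrightarrow> 0 \<le> V i \<and> V i \<le> M"
begin

sublocale noise: prob_space "noise_law n"
  by (rule prob_space_noise_law)

abbreviation R :: "nat \<Rightarrow> (nat \<Rightarrow> real) \<Rightarrow> real" where
  "R i \<omega> \<equiv> diffR n f V \<omega> i"

lemma M_nonneg: "0 \<le> M"
  using f_bounded[of 0] by simp

lemma diffR_eq: "R i \<omega> = delta n f i + (- sqrt (V i)) * \<omega> i + sqrt (V (Suc i)) * \<omega> (Suc i)"
  unfolding diffR_def obsY_def delta_def by (simp add: algebra_simps)

lemma diffR_restrict: "i \<in> A \<Longrightarrow> Suc i \<in> A \<Longrightarrow> R i (restrict \<omega> A) = R i \<omega>"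
  unfolding diffR_eq by simp

lemma borel_measurable_diffR_PiM [measurable (raw)]:
  "i \<in> A \<Longrightarrow> Suc i \<in> A \<Longrightarrow> R i \<in> borel_measurable (PiM A (\<lambda>_. std_normal))"
  unfolding diffR_eq[abs_def] by measurable

lemma borel_measurable_diffR [measurable (raw)]:
  "i \<in> {1..n - 1} \<Longrightarrow> R i \<in> borel_measurable (noise_law n)"
  unfolding diffR_eq[abs_def] by measurable auto

lemma integrable_diffR_power: "i \<in> {1..n - 1} \<Longrightarrow> integrable (noise_law n) (\<lambda>\<omega>. R i \<omega> ^ k)"
  unfolding diffR_eq by (rule integrable_noise_affine_power) auto

definition mean_square :: "nat \<Rightarrow> real" where
  "mean_square i = Wsum V i + delta n f i ^ 2"

lemma integral_diffR_square:
  assumes "i \<in> {1..n - 1}"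
  shows "integral\<^sup>L (noise_law n) (\<lambda>\<omega>. (R i \<omega>)\<^sup>2) = mean_square i"
  using assms V_bounded[of i] V_bounded[of "Suc i"]
  unfolding diffR_eq mean_square_def Wsum_def by (subst integral_noise_affine_square) auto

lemma integral_diffR_fourth:
  assumes "i \<in> {1..n - 1}"
  shows "integral\<^sup>L (noise_law n) (\<lambda>\<omega>. R i \<omega> ^ 4) = 3 * (mean_square i)\<^sup>2 - 2 * delta n f i ^ 4"
  using assms V_bounded[of i] V_bounded[of "Suc i"]
  unfolding diffR_eq mean_square_def Wsum_def
  by (subst integral_noise_affine_fourth) (auto simp: power2_eq_square power4_eq_xxxx algebra_simps)

lemma delta_bounded:
  assumes "i \<in> {1..n - 1}"
  shows "\<bar>delta n f i\<bar> \<le> 2 * M"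
proof -
  have "\<bar>f (real i / real n)\<bar> \<le> M" "\<bar>f (real (Suc i) / real n)\<bar> \<le> M"
    using assms n_ge_2 by (auto intro!: f_bounded simp: field_simps)
  then show ?thesis unfolding delta_def by linarith
qed

lemma mean_square_bounded:
  assumes "i \<in> {1..n - 1}"
  shows "0 \<le> mean_square i \<and> mean_square i \<le> second_moment_bound M"
proof -
  have "(delta n f i)\<^sup>2 \<le> (2 * M)\<^sup>2"
    using delta_bounded[OF assms] M_nonneg by (subst power2_le_iff_abs_le) auto
  moreover have "i \<in> {1..n}" "Suc i \<in> {1..n}" using assms by auto
  ultimately show ?thesis
    using V_bounded[of i] V_bounded[of "Suc i"] unfolding mean_square_def Wsum_def second_moment_bound_def
    by (simp add: power_mult_distrib)
qed

lemma integral_diffR_eighth_le: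
  assumes i: "i \<in> {1..n - 1}"
  shows "integral\<^sup>L (noise_law n) (\<lambda>\<omega>. R i \<omega> ^ 8) \<le> eighth_moment_bound M"
proof -
  have u: "i \<in> {1..n}" "Suc i \<in> {1..n}" using i by auto
  have power8_measurable: "(\<lambda>x::real. x ^ 8) \<in> borel_measurable borel" by measurable
  have moment8: "integral\<^sup>L (noise_law n) (\<lambda>\<omega>. \<omega> u ^ 8) = 105"
      "integrable (noise_law n) (\<lambda>\<omega>. \<omega> u ^ 8)"
    if "u \<in> {1..n}" for u
    using integral_noise_coordinate[OF that power8_measurable] std_normal_moment_eight
      integrable_noise_coordinate[OF that power8_measurable integrable_std_normal_power]
    by (simp_all add: std_normal_moment_def)
  have sqrt8: "sqrt (V u) ^ 8 = V u ^ 4" if "u \<in> {1..n}" for u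
  proof -
    have "sqrt (V u) ^ 8 = (sqrt (V u) ^ 2) ^ 4" by (simp flip: power_mult)
    then show ?thesis using V_bounded[OF that] by simp
  qed
  have "R i \<omega> ^ 8 \<le> 3 ^ 8 * (delta n f i ^ 8 + (- sqrt (V i) * \<omega> i) ^ 8 + (sqrt (V (Suc i)) * \<omega> (Suc i)) ^ 8)"
    for \<omega> unfolding diffR_eq by (rule power8_sum3_le)
  then have pointwise: "R i \<omega> ^ 8 \<le> 3 ^ 8 * (delta n f i ^ 8 + V i ^ 4 * \<omega> i ^ 8 + V (Suc i) ^ 4 * \<omega> (Suc i) ^ 8)"
    for \<omega> by (simp add: power_mult_distrib sqrt8[OF u(1)] sqrt8[OF u(2)])
  have "integral\<^sup>L (noise_law n) (\<lambda>\<omega>. R i \<omega> ^ 8)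
      \<le> integral\<^sup>L (noise_law n)
          (\<lambda>\<omega>. 3 ^ 8 * (delta n f i ^ 8 + V i ^ 4 * \<omega> i ^ 8 + V (Suc i) ^ 4 * \<omega> (Suc i) ^ 8))"
    using integrable_diffR_power[OF i] moment8[OF u(1)] moment8[OF u(2)] by (intro integral_mono pointwise) auto
  also have "\<dots> = 3 ^ 8 * (delta n f i ^ 8 + 105 * V i ^ 4 + 105 * V (Suc i) ^ 4)"
    using moment8[OF u(1)] moment8[OF u(2)] by (simp add: noise.prob_space)
  also have "\<dots> \<le> eighth_moment_bound M"
  proof -
    have "delta n f i ^ 8 \<le> (2 * M) ^ 8"
      using power_mono[OF delta_bounded[OF i], of 8] by (simp add: power_even_abs_numeral)
    moreover have "V i ^ 4 \<le> M ^ 4" "V (Suc i) ^ 4 \<le> M ^ 4"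
      using V_bounded[OF u(1)] V_bounded[OF u(2)] by (auto intro: power_mono)
    ultimately show ?thesis unfolding eighth_moment_bound_def by simp
  qed
  finally show ?thesis .
qed

definition pair_kernel :: "nat \<Rightarrow> nat \<Rightarrow> (nat \<Rightarrow> real) \<Rightarrow> real" where
  "pair_kernel i j \<omega> = (1/3) * (R i \<omega> ^ 4 + R j \<omega> ^ 4) - 2 * (R i \<omega>)\<^sup>2 * (R j \<omega>)\<^sup>2"

lemma pair_kernel_restrict:
  "i \<in> A \<Longrightarrow> Suc i \<in> A \<Longrightarrow> j \<in> A \<Longrightarrow> Suc j \<in> A
    \<Longrightarrow> pair_kernel i j (restrict \<omega> A) = pair_kernel i j \<omega>"
  unfolding pair_kernel_def by (simp add: diffR_restrict)

lemma borel_measurable_pair_kernel_PiM [measurable (raw)]: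
  "i \<in> A \<Longrightarrow> Suc i \<in> A \<Longrightarrow> j \<in> A \<Longrightarrow> Suc j \<in> A
    \<Longrightarrow> pair_kernel i j \<in> borel_measurable (PiM A (\<lambda>_. std_normal))"
  unfolding pair_kernel_def[abs_def] by measurable

lemma borel_measurable_pair_kernel [measurable (raw)]:
  "i \<in> {1..n - 1} \<Longrightarrow> j \<in> {1..n - 1} \<Longrightarrow> pair_kernel i j \<in> borel_measurable (noise_law n)"
  unfolding pair_kernel_def[abs_def] by measurable

lemma integrable_diffR_square_mult:
  "i \<in> {1..n - 1} \<Longrightarrow> j \<in> {1..n - 1}
    \<Longrightarrow> integrable (noise_law n) (\<lambda>\<omega>. (R i \<omega>)\<^sup>2 * (R j \<omega>)\<^sup>2)"
  by (rule integrable_mult_of_squares) (auto simp flip: power_mult intro: integrable_diffR_power)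

lemma integrable_pair_kernel:
  assumes "i \<in> {1..n - 1}" "j \<in> {1..n - 1}"
  shows "integrable (noise_law n) (pair_kernel i j)"
  unfolding pair_kernel_def[abs_def] mult.assoc[of 2]
  using integrable_diffR_square_mult[OF assms] integrable_diffR_power[OF assms(1)] integrable_diffR_power[OF assms(2)]
  by auto

lemma
  assumes "i \<in> {1..n - 1}" "j \<in> {1..n - 1}"
  shows integrable_pair_kernel_square: "integrable (noise_law n) (\<lambda>\<omega>. (pair_kernel i j \<omega>)\<^sup>2)"
    and integral_pair_kernel_square_le:
      "integral\<^sup>L (noise_law n) (\<lambda>\<omega>. (pair_kernel i j \<omega>)\<^sup>2) \<le> 10 * eighth_moment_bound M"
proof -
  have bound: "integrable (noise_law n) (\<lambda>\<omega>. 5 * (R i \<omega> ^ 8 + R j \<omega> ^ 8))"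
    using integrable_diffR_power[OF assms(1)] integrable_diffR_power[OF assms(2)] by auto
  have pointwise: "(pair_kernel i j \<omega>)\<^sup>2 \<le> 5 * (R i \<omega> ^ 8 + R j \<omega> ^ 8)" for \<omega>
    unfolding pair_kernel_def by (rule quartic_kernel_square_le)
  show integrable: "integrable (noise_law n) (\<lambda>\<omega>. (pair_kernel i j \<omega>)\<^sup>2)"
    using assms pointwise by (intro Bochner_Integration.integrable_bound[OF bound]) auto
  have "integral\<^sup>L (noise_law n) (\<lambda>\<omega>. (pair_kernel i j \<omega>)\<^sup>2)
      \<le> integral\<^sup>L (noise_law n) (\<lambda>\<omega>. 5 * (R i \<omega> ^ 8 + R j \<omega> ^ 8))"
    by (rule integral_mono[OF integrable bound pointwise])
  also have "\<dots> = 5 * (integral\<^sup>L (noise_law n) (\<lambda>\<omega>. R i \<omega> ^ 8)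
      + integral\<^sup>L (noise_law n) (\<lambda>\<omega>. R j \<omega> ^ 8))"
    using assms by (simp add: integrable_diffR_power)
  also have "\<dots> \<le> 10 * eighth_moment_bound M"
    using integral_diffR_eighth_le[OF assms(1)] integral_diffR_eighth_le[OF assms(2)] by simp
  finally show "integral\<^sup>L (noise_law n) (\<lambda>\<omega>. (pair_kernel i j \<omega>)\<^sup>2) \<le> 10 * eighth_moment_bound M" .
qed

lemma integral_diffR_square_mult_separated:
  assumes ij: "i \<in> {1..n - 1}" "j \<in> {1..n - 1}" and sep: "separated i j"
  shows "integral\<^sup>L (noise_law n) (\<lambda>\<omega>. (R i \<omega>)\<^sup>2 * (R j \<omega>)\<^sup>2) = mean_square i * mean_square j"
  using ij sep
  by (subst integral_noise_mult_disjoint_blocks[where A = "{i, Suc i}" and B = "{j, Suc j}"])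
     (auto simp: separated_def diffR_restrict integrable_diffR_power integral_diffR_square)

lemma integral_pair_kernel_separated:
  assumes ij: "i \<in> {1..n - 1}" "j \<in> {1..n - 1}" and sep: "separated i j"
  shows "integral\<^sup>L (noise_law n) (pair_kernel i j)
    = (mean_square i - mean_square j)\<^sup>2 - (2/3) * (delta n f i ^ 4 + delta n f j ^ 4)"
proof -
  have "integral\<^sup>L (noise_law n) (pair_kernel i j)
      = (1/3) * (integral\<^sup>L (noise_law n) (\<lambda>\<omega>. R i \<omega> ^ 4)
          + integral\<^sup>L (noise_law n) (\<lambda>\<omega>. R j \<omega> ^ 4))
        - 2 * integral\<^sup>L (noise_law n) (\<lambda>\<omega>. (R i \<omega>)\<^sup>2 * (R j \<omega>)\<^sup>2)"
    unfolding pair_kernel_def[abs_def] mult.assoc[of 2]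
    using ij integrable_diffR_square_mult[OF ij] by (simp add: integrable_diffR_power)
  also have "\<dots> = (1/3) * (3 * (mean_square i)\<^sup>2 - 2 * delta n f i ^ 4 + 3 * (mean_square j)\<^sup>2 - 2 * delta n f j ^ 4)
      - 2 * (mean_square i * mean_square j)"
    using ij sep by (simp add: integral_diffR_fourth integral_diffR_square_mult_separated)
  finally show ?thesis by (simp add: power2_diff field_simps)
qed

definition centred_kernel :: "nat \<Rightarrow> nat \<Rightarrow> (nat \<Rightarrow> real) \<Rightarrow> real" where
  "centred_kernel i j \<omega> =
     (if separated i j then pair_kernel i j \<omega> - integral\<^sup>L (noise_law n) (pair_kernel i j) else 0)"

lemma centred_kernel_restrict:
  "i \<in> A \<Longrightarrow> Suc i \<in> A \<Longrightarrow> j \<in> A \<Longrightarrow> Suc j \<in> A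
    \<Longrightarrow> centred_kernel i j (restrict \<omega> A) = centred_kernel i j \<omega>"
  unfolding centred_kernel_def by (simp add: pair_kernel_restrict)

lemma borel_measurable_centred_kernel_PiM [measurable (raw)]:
  "i \<in> A \<Longrightarrow> Suc i \<in> A \<Longrightarrow> j \<in> A \<Longrightarrow> Suc j \<in> A
    \<Longrightarrow> centred_kernel i j \<in> borel_measurable (PiM A (\<lambda>_. std_normal))"
  unfolding centred_kernel_def[abs_def] by measurable

lemma borel_measurable_centred_kernel [measurable (raw)]:
  "i \<in> {1..n - 1} \<Longrightarrow> j \<in> {1..n - 1} \<Longrightarrow> centred_kernel i j \<in> borel_measurable (noise_law n)"
  unfolding centred_kernel_def[abs_def] by measurable

lemma
  assumes "i \<in> {1..n - 1}" "j \<in> {1..n - 1}"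
  shows integrable_centred_kernel: "integrable (noise_law n) (centred_kernel i j)"
    and integral_centred_kernel: "integral\<^sup>L (noise_law n) (centred_kernel i j) = 0"
proof -
  have "centred_kernel i j
      = (if separated i j then (\<lambda>\<omega>. pair_kernel i j \<omega> - integral\<^sup>L (noise_law n) (pair_kernel i j)) else (\<lambda>_. 0))"
    by (auto simp: centred_kernel_def)
  then show "integrable (noise_law n) (centred_kernel i j)" "integral\<^sup>L (noise_law n) (centred_kernel i j) = 0"
    using integrable_pair_kernel[OF assms] by (simp_all add: noise.prob_space)
qed

lemma
  assumes "i \<in> {1..n - 1}" "j \<in> {1..n - 1}"
  shows integrable_centred_kernel_square: "integrable (noise_law n) (\<lambda>\<omega>. (centred_kernel i j \<omega>)\<^sup>2)"
    and integral_centred_kernel_square_le: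
      "integral\<^sup>L (noise_law n) (\<lambda>\<omega>. (centred_kernel i j \<omega>)\<^sup>2) \<le> 10 * eighth_moment_bound M"
proof -
  have "integrable (noise_law n) (\<lambda>\<omega>. (centred_kernel i j \<omega>)\<^sup>2)
    \<and> integral\<^sup>L (noise_law n) (\<lambda>\<omega>. (centred_kernel i j \<omega>)\<^sup>2) \<le> 10 * eighth_moment_bound M"
  proof (cases "separated i j")
    case True
    define \<mu> where "\<mu> = integral\<^sup>L (noise_law n) (pair_kernel i j)"
    have expand:
      "(centred_kernel i j \<omega>)\<^sup>2 = (pair_kernel i j \<omega>)\<^sup>2 - 2 * \<mu> * pair_kernel i j \<omega> + \<mu>\<^sup>2" for \<omega>
      using True unfolding centred_kernel_def \<mu>_def by (simp add: power2_diff)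
    note square = integrable_pair_kernel_square[OF assms] integral_pair_kernel_square_le[OF assms]
    have "integral\<^sup>L (noise_law n) (\<lambda>\<omega>. (centred_kernel i j \<omega>)\<^sup>2)
        = integral\<^sup>L (noise_law n) (\<lambda>\<omega>. (pair_kernel i j \<omega>)\<^sup>2) - \<mu>\<^sup>2"
      unfolding expand using square integrable_pair_kernel[OF assms]
      by (simp add: \<mu>_def noise.prob_space power2_eq_square)
    moreover have "integrable (noise_law n) (\<lambda>\<omega>. (centred_kernel i j \<omega>)\<^sup>2)"
      unfolding expand using square integrable_pair_kernel[OF assms] by auto
    ultimately show ?thesis
      using square zero_le_power2[of \<mu>] by linarith
  next
    case False
    then show ?thesis
      using M_nonneg by (simp add: centred_kernel_def eighth_moment_bound_def)
  qed
  then show "integrable (noise_law n) (\<lambda>\<omega>. (centred_kernel i j \<omega>)\<^sup>2)"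
    and "integral\<^sup>L (noise_law n) (\<lambda>\<omega>. (centred_kernel i j \<omega>)\<^sup>2) \<le> 10 * eighth_moment_bound M"
    by auto
qed

lemma
  assumes "i \<in> {1..n - 1}" "j \<in> {1..n - 1}" "k \<in> {1..n - 1}" "l \<in> {1..n - 1}"
  shows integrable_centred_kernel_mult:
      "integrable (noise_law n) (\<lambda>\<omega>. centred_kernel i j \<omega> * centred_kernel k l \<omega>)"
    and abs_integral_centred_kernel_mult_le:
      "\<bar>integral\<^sup>L (noise_law n) (\<lambda>\<omega>. centred_kernel i j \<omega> * centred_kernel k l \<omega>)\<bar>
         \<le> 20 * eighth_moment_bound M"
proof -
  note squares = integrable_centred_kernel_square[OF assms(1,2)] integrable_centred_kernel_square[OF assms(3,4)]
  show integrable: "integrable (noise_law n) (\<lambda>\<omega>. centred_kernel i j \<omega> * centred_kernel k l \<omega>)"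
    using squares assms by (intro integrable_mult_of_squares) auto
  have "\<bar>integral\<^sup>L (noise_law n) (\<lambda>\<omega>. centred_kernel i j \<omega> * centred_kernel k l \<omega>)\<bar>
      \<le> integral\<^sup>L (noise_law n) (\<lambda>\<omega>. (centred_kernel i j \<omega>)\<^sup>2 + (centred_kernel k l \<omega>)\<^sup>2)"
  proof (rule order_trans[OF integral_abs_bound integral_mono])
    show "integrable (noise_law n) (\<lambda>\<omega>. (centred_kernel i j \<omega>)\<^sup>2 + (centred_kernel k l \<omega>)\<^sup>2)"
      using squares by (rule Bochner_Integration.integrable_add)
  qed (use integrable abs_mult_le_sum_squares in auto)
  also have "\<dots> \<le> 20 * eighth_moment_bound M"
    using squares integral_centred_kernel_square_le[OF assms(1,2)] integral_centred_kernel_square_le[OF assms(3,4)]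
    by simp
  finally show "\<bar>integral\<^sup>L (noise_law n) (\<lambda>\<omega>. centred_kernel i j \<omega> * centred_kernel k l \<omega>)\<bar>
      \<le> 20 * eighth_moment_bound M" .
qed

lemma integral_centred_kernel_mult_pairs_separated:
  assumes "i \<in> {1..n - 1}" "j \<in> {1..n - 1}" "k \<in> {1..n - 1}" "l \<in> {1..n - 1}"
    and "pairs_separated (i, j) (k, l)"
  shows "integral\<^sup>L (noise_law n) (\<lambda>\<omega>. centred_kernel i j \<omega> * centred_kernel k l \<omega>) = 0"
  using assms
  by (subst integral_noise_mult_disjoint_blocks[where A = "{i, Suc i, j, Suc j}" and B = "{k, Suc k, l, Suc l}"])
     (auto simp: separated_def centred_kernel_restrict integrable_centred_kernel integral_centred_kernel)

definition fluctuation :: "(nat \<Rightarrow> real) \<Rightarrow> real" where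
  "fluctuation \<omega> = (\<Sum>i\<in>{1..n - 1}. \<Sum>j\<in>{1..n - 1}. centred_kernel i j \<omega>)"

text \<open>By independence only the \<open>O(n\<^sup>3)\<close> pairs of index pairs that are not separated
  contribute to the second moment.\<close>
lemma
  shows integrable_fluctuation_square: "integrable (noise_law n) (\<lambda>\<omega>. (fluctuation \<omega>)\<^sup>2)"
    and integral_fluctuation_square_le:
      "integral\<^sup>L (noise_law n) (\<lambda>\<omega>. (fluctuation \<omega>)\<^sup>2) \<le> 240 * eighth_moment_bound M * real (n - 1) ^ 3"
proof -
  define P where "P = {1..n - 1} \<times> {1..n - 1}"
  define Y where "Y = case_prod centred_kernel"
  have expand: "(fluctuation \<omega>)\<^sup>2 = (\<Sum>p\<in>P. \<Sum>q\<in>P. Y p \<omega> * Y q \<omega>)" for \<omega>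
    unfolding fluctuation_def P_def Y_def power2_eq_square sum.cartesian_product sum_product
    by (simp add: case_prod_beta)
  have integrable: "integrable (noise_law n) (\<lambda>\<omega>. Y p \<omega> * Y q \<omega>)" if "p \<in> P" "q \<in> P" for p q
    using that integrable_centred_kernel_mult unfolding P_def Y_def by auto
  show "integrable (noise_law n) (\<lambda>\<omega>. (fluctuation \<omega>)\<^sup>2)"
    unfolding expand using integrable by auto
  have term_le: "integral\<^sup>L (noise_law n) (\<lambda>\<omega>. Y p \<omega> * Y q \<omega>)
      \<le> (if pairs_separated p q then 0 else 20 * eighth_moment_bound M)" if "p \<in> P" "q \<in> P" for p q
    using that abs_integral_centred_kernel_mult_le integral_centred_kernel_mult_pairs_separated
    unfolding P_def Y_def by (fastforce simp: abs_le_iff)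
  have "integral\<^sup>L (noise_law n) (\<lambda>\<omega>. (fluctuation \<omega>)\<^sup>2)
      = (\<Sum>p\<in>P. \<Sum>q\<in>P. integral\<^sup>L (noise_law n) (\<lambda>\<omega>. Y p \<omega> * Y q \<omega>))"
    unfolding expand using integrable by (rule integral_sum_sum)
  also have "\<dots> \<le> (\<Sum>p\<in>P. \<Sum>q\<in>P. if pairs_separated p q then 0 else 20 * eighth_moment_bound M)"
    using term_le by (intro sum_mono) auto
  also have "\<dots> \<le> (\<Sum>p\<in>P. 12 * real (n - 1) * (20 * eighth_moment_bound M))"
    using sum_not_pairs_separated_le[of "{1..n - 1}" "20 * eighth_moment_bound M"] M_nonneg
    unfolding P_def eighth_moment_bound_def by (intro sum_mono) auto
  also have "\<dots> = 240 * eighth_moment_bound M * real (n - 1) ^ 3"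
    unfolding P_def by (simp add: power3_eq_cube)
  finally show "integral\<^sup>L (noise_law n) (\<lambda>\<omega>. (fluctuation \<omega>)\<^sup>2)
      \<le> 240 * eighth_moment_bound M * real (n - 1) ^ 3" .
qed

definition bias :: real where
  "bias = 1 / (2 * real n ^ 2) *
     (\<Sum>i\<in>{1..n - 1}. \<Sum>j\<in>{1..n - 1}.
        if separated i j then integral\<^sup>L (noise_law n) (pair_kernel i j) else 0)
     - Ttarget n f V"

lemma That_minus_Ttarget_eq: "That n f V \<xi> - Ttarget n f V = fluctuation \<xi> / (2 * real n ^ 2) + bias"
proof -
  have "That n f V \<xi> = 1 / (2 * real n ^ 2) *
      (\<Sum>i\<in>{1..n - 1}. \<Sum>j\<in>{1..n - 1}. if separated i j then pair_kernel i j \<xi> else 0)"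
    unfolding That_def pair_kernel_def separated_def
    by (simp only: sum.inter_filter[OF finite_atLeastAtMost])
  also have "(\<Sum>i\<in>{1..n - 1}. \<Sum>j\<in>{1..n - 1}. if separated i j then pair_kernel i j \<xi> else 0)
      = fluctuation \<xi> + (\<Sum>i\<in>{1..n - 1}. \<Sum>j\<in>{1..n - 1}.
          if separated i j then integral\<^sup>L (noise_law n) (pair_kernel i j) else 0)"
    unfolding fluctuation_def centred_kernel_def sum.distrib[symmetric] by (intro sum.cong) auto
  finally show ?thesis
    unfolding bias_def by (simp add: algebra_simps)
qed

lemma abs_bias_le:
  assumes e: "\<And>i. i \<in> {1..n - 1} \<Longrightarrow> \<bar>delta n f i\<bar> \<le> e"
  shows "\<bar>bias\<bar> \<le> 3 * (second_moment_bound M)\<^sup>2 / real n + e ^ 4"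
proof -
  have N: "1 \<le> n - 1" "n - 1 + 1 = n" using n_ge_2 by auto
  have d: "0 \<le> delta n f i ^ 4 \<and> delta n f i ^ 4 \<le> e ^ 4" if "i \<in> {1..n - 1}" for i
    using power_mono[OF e[OF that], of 4] by (simp add: power_even_abs_numeral)
  have "(\<Sum>i\<in>{1..n - 1}. \<Sum>j\<in>{1..n - 1}.
          if separated i j then integral\<^sup>L (noise_law n) (pair_kernel i j) else 0)
      = (\<Sum>i\<in>{1..n - 1}. \<Sum>j\<in>{1..n - 1}. if separated i j
          then (mean_square i - mean_square j)\<^sup>2 - (2/3) * (delta n f i ^ 4 + delta n f j ^ 4) else 0)"
    by (intro sum.cong) (auto simp: integral_pair_kernel_separated)
  moreover have "Ttarget n f V = 1 / real n *
      (\<Sum>i\<in>{1..n - 1}. (mean_square i - (\<Sum>k\<in>{1..n - 1}. mean_square k) / real (n - 1))\<^sup>2)"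
    unfolding Ttarget_def Let_def mean_square_def
    by (simp add: sum.distrib add_divide_distrib algebra_simps)
  ultimately show ?thesis
    using separated_pairs_bias_le[OF N(1) mean_square_bounded d] unfolding bias_def N(2) by simp
qed

lemma bias_square_le:
  assumes e: "\<And>i. i \<in> {1..n - 1} \<Longrightarrow> \<bar>delta n f i\<bar> \<le> e"
  shows "bias\<^sup>2 \<le> 18 * second_moment_bound M ^ 4 / real n + 2 * e ^ 8"
proof -
  define B where "B = second_moment_bound M"
  have n: "1 \<le> real n" using n_ge_2 by simp
  have "bias\<^sup>2 \<le> (3 * B\<^sup>2 / real n + e ^ 4)\<^sup>2"
    using abs_bias_le[OF e] unfolding B_def by (simp add: power2_le_iff_abs_le)
  also have "\<dots> \<le> 2 * (3 * B\<^sup>2 / real n)\<^sup>2 + 2 * (e ^ 4)\<^sup>2"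
    by (rule square_add_le)
  also have "(3 * B\<^sup>2 / real n)\<^sup>2 = 9 * B ^ 4 / (real n * real n)"
    by (simp add: power2_eq_square power4_eq_xxxx field_simps)
  also have "\<dots> \<le> 9 * B ^ 4 / real n"
    using n by (intro divide_left_mono) auto
  finally show ?thesis
    unfolding B_def by (simp flip: power_mult)
qed

lemma
  shows integrable_scaled_fluctuation_square:
      "integrable (noise_law n) (\<lambda>\<xi>. 2 * (fluctuation \<xi> / (2 * real n ^ 2))\<^sup>2)"
    and integral_scaled_fluctuation_square_le:
      "integral\<^sup>L (noise_law n) (\<lambda>\<xi>. 2 * (fluctuation \<xi> / (2 * real n ^ 2))\<^sup>2)
         \<le> 120 * eighth_moment_bound M / real n"
proof -
  define K where "K = eighth_moment_bound M"
  have scale: "2 * (x / (2 * real n ^ 2))\<^sup>2 = x\<^sup>2 / (2 * real n ^ 4)" for x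
    by (simp add: power_divide power_mult_distrib flip: power_mult)
  show "integrable (noise_law n) (\<lambda>\<xi>. 2 * (fluctuation \<xi> / (2 * real n ^ 2))\<^sup>2)"
    unfolding scale using integrable_fluctuation_square by simp
  have "0 \<le> K" unfolding K_def eighth_moment_bound_def using M_nonneg by simp
  then have "240 * K * real (n - 1) ^ 3 \<le> 240 * K * real n ^ 3"
    by (intro mult_left_mono power_mono) auto
  then have "integral\<^sup>L (noise_law n) (\<lambda>\<xi>. (fluctuation \<xi>)\<^sup>2) / (2 * real n ^ 4)
      \<le> 240 * K * real n ^ 3 / (2 * real n ^ 4)"
    using integral_fluctuation_square_le unfolding K_def by (intro divide_right_mono) auto
  also have "\<dots> = 120 * K / real n"
    using n_ge_2 by (simp add: field_simps power3_eq_cube power4_eq_xxxx)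
  finally show "integral\<^sup>L (noise_law n) (\<lambda>\<xi>. 2 * (fluctuation \<xi> / (2 * real n ^ 2))\<^sup>2)
      \<le> 120 * eighth_moment_bound M / real n"
    unfolding scale K_def by simp
qed

theorem mean_square_error_le:
  assumes e: "\<And>i. i \<in> {1..n - 1} \<Longrightarrow> \<bar>delta n f i\<bar> \<le> e"
  shows "(\<integral>\<^sup>+ \<xi>. ennreal ((That n f V \<xi> - Ttarget n f V)\<^sup>2) \<partial>noise_law n)
    \<le> ennreal ((120 * eighth_moment_bound M + 36 * second_moment_bound M ^ 4) / real n + 4 * e ^ 8)"
proof -
  define S where "S \<xi> = 2 * (fluctuation \<xi> / (2 * real n ^ 2))\<^sup>2" for \<xi>
  have "(That n f V \<xi> - Ttarget n f V)\<^sup>2 \<le> S \<xi> + 2 * bias\<^sup>2" for \<xi>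
    unfolding That_minus_Ttarget_eq S_def by (rule square_add_le)
  then have "(\<integral>\<^sup>+ \<xi>. ennreal ((That n f V \<xi> - Ttarget n f V)\<^sup>2) \<partial>noise_law n)
      \<le> (\<integral>\<^sup>+ \<xi>. ennreal (S \<xi> + 2 * bias\<^sup>2) \<partial>noise_law n)"
    by (intro nn_integral_mono ennreal_leI)
  also have "\<dots> = ennreal (integral\<^sup>L (noise_law n) S + 2 * bias\<^sup>2)"
    using integrable_scaled_fluctuation_square unfolding S_def
    by (subst nn_integral_eq_integral) (auto simp: noise.prob_space)
  also have "\<dots> \<le> ennreal ((120 * eighth_moment_bound M + 36 * second_moment_bound M ^ 4) / real n + 4 * e ^ 8)"
    using integral_scaled_fluctuation_square_le bias_square_le[OF e] unfolding S_def
    by (intro ennreal_leI) (simp add: add_divide_distrib)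
  finally show ?thesis .
qed

end

section \<open>Hoelder classes\<close>

lemma holder_class_bounded:
  assumes "holder_class \<alpha> M f" "0 \<le> x" "x \<le> 1"
  shows "\<bar>f x\<bar> \<le> M"
  using assms unfolding holder_class_def Let_def by force

lemma holder_class_increment:
  assumes "0 < \<alpha>" and "holder_class \<alpha> M f" and xy: "x \<in> {0..1}" "y \<in> {0..1}"
  shows "\<bar>f x - f y\<bar> \<le> M * \<bar>x - y\<bar> powr min \<alpha> 1"
proof -
  define k where "k = nat \<lfloor>\<alpha>\<rfloor>"
  obtain D where D0: "\<forall>x\<in>{0..1}. D 0 x = f x"
    and D_deriv: "\<forall>j<k. \<forall>x\<in>{0..1}. (D j has_real_derivative D (Suc j) x) (at x within {0..1})"
    and D_bounded: "\<forall>j\<le>k. \<forall>x\<in>{0..1}. \<bar>D j x\<bar> \<le> M"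
    and D_holder: "\<forall>x\<in>{0..1}. \<forall>y\<in>{0..1}. \<bar>D k x - D k y\<bar> \<le> M * \<bar>x - y\<bar> powr (\<alpha> - real k)"
    using assms(2) unfolding holder_class_def Let_def k_def by blast
  have f_eq: "f x - f y = D 0 x - D 0 y" using D0 xy by simp
  show ?thesis
  proof (cases "\<alpha> < 1")
    case True
    then have "k = 0" unfolding k_def using assms(1) by linarith
    then show ?thesis using D_holder xy True unfolding f_eq by simp
  next
    case False
    then have k: "1 \<le> k" unfolding k_def by linarith
    have "norm (D 0 x - D 0 y) \<le> M * norm (x - y)"
    proof (rule field_differentiable_bound[of "{0..1}"])
      show "(D 0 has_field_derivative D 1 z) (at z within {0..1})" if "z \<in> {0..1}" for z
        using D_deriv k that by auto
      show "norm (D 1 z) \<le> M" if "z \<in> {0..1}" for z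
        using D_bounded k that by auto
    qed (use xy in auto)
    then show ?thesis using False unfolding f_eq by simp
  qed
qed

lemma delta_le_holder:
  fixes n :: nat
  assumes "0 < \<alpha>" "holder_class \<alpha> M f" "1 \<le> n" "i < n"
  shows "\<bar>delta n f i\<bar> \<le> M * real n powr (- min \<alpha> 1)"
proof -
  have "\<bar>delta n f i\<bar> \<le> M * \<bar>real (Suc i) / real n - real i / real n\<bar> powr min \<alpha> 1"
    unfolding delta_def using assms by (intro holder_class_increment) auto
  also have "\<bar>real (Suc i) / real n - real i / real n\<bar> = 1 / real n"
    by (simp add: diff_divide_distrib[symmetric])
  finally show ?thesis using assms(3) by (simp add: powr_minus_divide powr_divide)
qed

lemma holder_rate_pow8_le:
  fixes n :: nat
  assumes "1 \<le> n"
  shows "(real n powr (- min \<alpha> 1)) ^ 8 \<le> 1 / real n + real n powr (- 8 * \<alpha>)"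
proof (cases "\<alpha> \<le> 1")
  case True
  then show ?thesis using assms by (simp add: powr_realpow[symmetric] powr_powr mult.commute)
next
  case False
  then have "(real n powr (- min \<alpha> 1)) ^ 8 = 1 / real n ^ 8"
    using assms by (simp add: powr_minus_divide power_divide)
  also have "\<dots> \<le> 1 / real n"
    using assms by (intro divide_left_mono self_le_power) auto
  finally show ?thesis using powr_ge_zero[of "real n" "- 8 * \<alpha>"] by linarith
qed

lemma holder_rate_bound:
  fixes n :: nat
  assumes n: "1 \<le> n" and A: "0 \<le> A"
  shows "A / real n + 4 * (M * real n powr (- min \<alpha> 1)) ^ 8
    \<le> (A + 4 * M ^ 8 + 1) * (1 / real n + real n powr (- 8 * \<alpha>))"
proof -
  define S where "S = 1 / real n + real n powr (- 8 * \<alpha>)"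
  have S: "1 / real n \<le> S" "(M * real n powr (- min \<alpha> 1)) ^ 8 \<le> M ^ 8 * S"
    using holder_rate_pow8_le[of n \<alpha>] n unfolding S_def
    by (auto simp: power_mult_distrib intro: mult_left_mono)
  then have "A / real n + 4 * (M * real n powr (- min \<alpha> 1)) ^ 8 \<le> A * S + 4 * (M ^ 8 * S)"
    using mult_left_mono[OF S(1) A] by simp
  also have "\<dots> \<le> (A + 4 * M ^ 8 + 1) * S"
    using S(1) n by (simp add: algebra_simps order_trans[OF _ S(1)])
  finally show ?thesis unfolding S_def .
qed

theorem proposition4p3:
  fixes \<alpha> M :: real
  assumes "\<alpha> > 0"
  shows "\<exists>C>0. \<forall>n\<ge>2. \<forall>f V.
           holder_class \<alpha> M f \<longrightarrow> (\<forall>i\<in>{1..n}. 0 \<le> V i \<and> V i \<le> M) \<longrightarrow>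
           (\<integral>\<^sup>+ \<xi>. ennreal ((That n f V \<xi> - Ttarget n f V)\<^sup>2) \<partial>noise_law n)
             \<le> ennreal (C * (1 / real n + real n powr (- 8 * \<alpha>)))"
proof -
  define A where "A = 120 * eighth_moment_bound M + 36 * second_moment_bound M ^ 4"
  have A: "0 \<le> A" unfolding A_def eighth_moment_bound_def by simp
  show ?thesis
  proof (intro exI[of _ "A + 4 * M ^ 8 + 1"] conjI allI impI)
    show "0 < A + 4 * M ^ 8 + 1" using A by (simp add: add_nonneg_pos)
    fix n :: nat and f :: "real \<Rightarrow> real" and V :: "nat \<Rightarrow> real"
    assume n: "2 \<le> n" and f: "holder_class \<alpha> M f" and V: "\<forall>i\<in>{1..n}. 0 \<le> V i \<and> V i \<le> M"
    interpret bounded_model n f V M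
      using n V holder_class_bounded[OF f] by unfold_locales auto
    have "(\<integral>\<^sup>+ \<xi>. ennreal ((That n f V \<xi> - Ttarget n f V)\<^sup>2) \<partial>noise_law n)
        \<le> ennreal (A / real n + 4 * (M * real n powr (- min \<alpha> 1)) ^ 8)"
      unfolding A_def using delta_le_holder[OF assms f] n by (intro mean_square_error_le) auto
    also have "\<dots> \<le> ennreal ((A + 4 * M ^ 8 + 1) * (1 / real n + real n powr (- 8 * \<alpha>)))"
      using n A by (intro ennreal_leI holder_rate_bound) auto
    finally show "(\<integral>\<^sup>+ \<xi>. ennreal ((That n f V \<xi> - Ttarget n f V)\<^sup>2) \<partial>noise_law n)
        \<le> ennreal ((A + 4 * M ^ 8 + 1) * (1 / real n + real n powr (- 8 * \<alpha>)))" .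
  qed
qed

end
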